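(* Let $\mathcal{F}=(\mathcal{F}_1,\dots,\mathcal{F}_k)$ be a generalized Galois flag of type $(s_1,\dots,s_k)$ on $\mathbb{F}_{q^n}$ with underlying Galois subflag $(\mathbb{F}_{q^{t_1}},\dots,\mathbb{F}_{q^{t_r}})$, let $\beta\in\mathbb{F}_{q^n}^\ast$ and $i\in\{1,\dots,r\}$. Then: (1) If $\beta\in\mathbb{F}_{q^{t_i}}^\ast$, then $d_S(\mathcal{F}_l,\mathcal{F}_l\beta)=0$ for every $l$ with $s_l\in\{t_i,\dots,t_r\}$. (2) If $\beta\notin\mathbb{F}_{q^{t_i}}^\ast$, then $d_S(\mathcal{F}_l,\mathcal{F}_l\beta)=2s_l$ for every $l$ with $s_l\le t_i$.
   Context: $q$ is a prime power, $\mathbb{F}_{q^n}$ is an $n$-dimensional $\mathbb{F}_q$-vector space; subspaces are $\mathbb{F}_q$-subspaces; $d_S(\mathcal{U},\mathcal{V})=\dim(\mathcal{U}+\mathcal{V})-\dim(\mathcal{U}\cap\mathcal{V})$. A flag is a chain $\{0\}\subsetneq\mathcal{F}_1\subsetneq\cdots\subsetneq\mathcal{F}_k\subsetneq\mathbb{F}_{q^n}$ of type $(\dim\mathcal{F}_1,\dots,\dim\mathcal{F}_k)$; a subflag is a flag whose subspaces all appear in the given flag. For divisors $t_1<\dots<t_r<n$ of $n$ with $t_i\mid t_{i+1}$, the Galois flag of type $(t_1,\dots,t_r)$ is $(\mathbb{F}_{q^{t_1}},\dots,\mathbb{F}_{q^{t_r}})$. A flag $\mathcal{F}$ of type $(s_1,\dots,s_k)$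 generalizes the Galois flag of type $(t_1,\dots,t_r)$ if $\{t_1,\dots,t_r\}\subsetneq\{s_1,\dots,s_k\}$, the subflag of $\mathcal{F}$ of type $(t_1,\dots,t_r)$ is that Galois flag, and at least one subspace of $\mathcal{F}$ is not a subfield; such $\mathcal{F}$ is a generalized Galois flag. Its underlying Galois subflag is its longest Galois subflag (the subflag formed by all its subspaces that are subfields of $\mathbb{F}_{q^n}$). *)

theory Defs
  imports "HOL-Algebra.Embedded_Algebras"
begin

text \<open>F_{q^n} is modelled as a finite field R; F_q is a subfield K of R (q = card K);
  subspaces are K-subspaces of R (library notion subalgebra K V R, i.e. an additive
  subgroup closed under multiplication by K); dimensions are ring.dim R K.\<close>

definition subspace_dist :: "('a, 'b) ring_scheme \<Rightarrow> 'a set \<Rightarrow> 'a set \<Rightarrow> 'a set \<Rightarrow> nat" where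
  "subspace_dist R K U V = ring.dim R K (U <+>\<^bsub>R\<^esub> V) - ring.dim R K (U \<inter> V)"

definition scal_mult :: "('a, 'b) ring_scheme \<Rightarrow> 'a set \<Rightarrow> 'a \<Rightarrow> 'a set" where
  "scal_mult R U \<beta> = (\<lambda>u. u \<otimes>\<^bsub>R\<^esub> \<beta>) ` U"

text \<open>The subfield F_{q^t} of R, i.e. the set of roots of X^(q^t) - X in R.\<close>
definition GF_sub :: "('a, 'b) ring_scheme \<Rightarrow> nat \<Rightarrow> nat \<Rightarrow> 'a set" where
  "GF_sub R q t = {x \<in> carrier R. x [^]\<^bsub>R\<^esub> (q ^ t) = x}"

definition is_flag :: "('a, 'b) ring_scheme \<Rightarrow> 'a set \<Rightarrow> nat \<Rightarrow> (nat \<Rightarrow> 'a set) \<Rightarrow> bool" where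
  "is_flag R K k F \<longleftrightarrow> 1 \<le> k \<and> (\<forall>l\<in>{1..k}. subalgebra K (F l) R)
     \<and> {\<zero>\<^bsub>R\<^esub>} \<subset> F 1 \<and> (\<forall>l\<in>{1..<k}. F l \<subset> F (Suc l)) \<and> F k \<subset> carrier R"

definition flag_type :: "('a, 'b) ring_scheme \<Rightarrow> 'a set \<Rightarrow> (nat \<Rightarrow> 'a set) \<Rightarrow> nat \<Rightarrow> nat" where
  "flag_type R K F l = ring.dim R K (F l)"

definition galois_type :: "nat \<Rightarrow> nat \<Rightarrow> (nat \<Rightarrow> nat) \<Rightarrow> bool" where
  "galois_type n r t \<longleftrightarrow> 1 \<le> r \<and> (\<forall>j\<in>{1..r}. 0 < t j \<and> t j dvd n)
     \<and> (\<forall>j\<in>{1..<r}. t j < t (Suc j) \<and> t j dvd t (Suc j)) \<and> t r < n"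

definition generalizes_galois :: "('a, 'b) ring_scheme \<Rightarrow> 'a set \<Rightarrow> nat \<Rightarrow> nat \<Rightarrow> (nat \<Rightarrow> 'a set)
     \<Rightarrow> nat \<Rightarrow> (nat \<Rightarrow> nat) \<Rightarrow> bool" where
  "generalizes_galois R K n k F r t \<longleftrightarrow> is_flag R K k F \<and> galois_type n r t
     \<and> t ` {1..r} \<subset> flag_type R K F ` {1..k}
     \<and> (\<forall>j\<in>{1..r}. \<forall>l\<in>{1..k}. flag_type R K F l = t j \<longrightarrow> F l = GF_sub R (card K) (t j))
     \<and> (\<exists>l\<in>{1..k}. \<not> subfield (F l) R)"

text \<open>Underlying Galois subflag of F is the Galois flag of type t: the subspaces of F
  that are subfields are exactly those of dimension t_1,...,t_r.\<close>
definition underlying_galois :: "('a, 'b) ring_scheme \<Rightarrow> 'a set \<Rightarrow> nat \<Rightarrow> (nat \<Rightarrow> 'a set)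
     \<Rightarrow> nat \<Rightarrow> (nat \<Rightarrow> nat) \<Rightarrow> bool" where
  "underlying_galois R K k F r t \<longleftrightarrow>
     (\<forall>l\<in>{1..k}. subfield (F l) R \<longleftrightarrow> flag_type R K F l \<in> t ` {1..r})"

end

theory Submission imports Defs begin

text \<open>Multiplication by \<open>\<beta> \<noteq> 0\<close> is an injective \<open>K\<close>-linear map, so \<open>U\<beta>\<close> has the
  dimension of \<open>U\<close>. If \<open>\<beta>\<close> lies in \<open>GF(q^t\<^sub>i)\<close> and \<open>F\<^sub>l = GF(q^t\<^sub>j)\<close> with \<open>t\<^sub>i | t\<^sub>j\<close>,
  this map permutes the finite field \<open>F\<^sub>l\<close>, so \<open>F\<^sub>l\<beta> = F\<^sub>l\<close>. If \<open>\<beta> \<notin> GF(q^t\<^sub>i)\<close>, every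
  \<open>F\<^sub>l\<close> of dimension at most \<open>t\<^sub>i\<close> lies inside \<open>GF(q^t\<^sub>i)\<close> because the flag is a chain, and
  \<open>u\<beta> \<in> GF(q^t\<^sub>i)\<close> for some \<open>0 \<noteq> u \<in> GF(q^t\<^sub>i)\<close> would force \<open>\<beta> \<in> GF(q^t\<^sub>i)\<close>;
  hence \<open>F\<^sub>l \<inter> F\<^sub>l\<beta> = 0\<close> and \<open>F\<^sub>l + F\<^sub>l\<beta>\<close> is direct of dimension \<open>2 s\<^sub>l\<close>.\<close>

lemma (in cring) line_extension_mult_image:
  assumes "K \<subseteq> carrier R" "E \<subseteq> carrier R" "v \<in> carrier R" "\<beta> \<in> carrier R"
  shows "(\<lambda>u. u \<otimes> \<beta>) ` line_extension K v E = line_extension K (v \<otimes> \<beta>) ((\<lambda>u. u \<otimes> \<beta>) ` E)"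
proof -
  have distr: "(k \<otimes> v \<oplus> e) \<otimes> \<beta> = k \<otimes> (v \<otimes> \<beta>) \<oplus> e \<otimes> \<beta>" if "k \<in> K" "e \<in> E" for k e
    using that assms by (simp add: l_distr m_assoc subsetD)
  show ?thesis
  proof (intro equalityI subsetI)
    fix x assume "x \<in> (\<lambda>u. u \<otimes> \<beta>) ` line_extension K v E"
    then obtain k e where "k \<in> K" "e \<in> E" "x = (k \<otimes> v \<oplus> e) \<otimes> \<beta>"
      using line_extension_mem_iff by auto
    then show "x \<in> line_extension K (v \<otimes> \<beta>) ((\<lambda>u. u \<otimes> \<beta>) ` E)"
      unfolding line_extension_mem_iff using distr by blast
  next
    fix x assume "x \<in> line_extension K (v \<otimes> \<beta>) ((\<lambda>u. u \<otimes> \<beta>) ` E)"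
    then obtain k e where ke: "k \<in> K" "e \<in> E" "x = k \<otimes> (v \<otimes> \<beta>) \<oplus> e \<otimes> \<beta>"
      using line_extension_mem_iff by auto
    then have "x = (k \<otimes> v \<oplus> e) \<otimes> \<beta>" using distr by simp
    moreover have "k \<otimes> v \<oplus> e \<in> line_extension K v E"
      using ke line_extension_mem_iff by auto
    ultimately show "x \<in> (\<lambda>u. u \<otimes> \<beta>) ` line_extension K v E" by blast
  qed
qed

lemma (in domain) dimension_mult_image:
  assumes K: "subfield K R" and E: "dimension n K E" and \<beta>: "\<beta> \<in> carrier R" "\<beta> \<noteq> \<zero>"
  shows "dimension n K ((\<lambda>u. u \<otimes> \<beta>) ` E)"
  using E K
proof (induction rule: dimension.induct)
  case zero_dim
  then show ?case using \<beta> by auto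
next
  case (Suc_dim v E n K)
  have E_carrier: "E \<subseteq> carrier R"
    using space_subgroup_props(1)[OF Suc_dim.prems Suc_dim.hyps(3)] .
  have "v \<otimes> \<beta> \<notin> (\<lambda>u. u \<otimes> \<beta>) ` E"
    using Suc_dim.hyps(1,2) E_carrier m_rcancel[OF \<beta>(2,1)] by blast
  then have "dimension (Suc n) K (line_extension K (v \<otimes> \<beta>) ((\<lambda>u. u \<otimes> \<beta>) ` E))"
    using Suc_dim \<beta> by (intro dimension.Suc_dim) auto
  then show ?case
    using line_extension_mult_image[OF subring_props(1)[OF Suc_dim.prems] E_carrier
        Suc_dim.hyps(1) \<beta>(1)]
    by simp
qed

lemma (in ring) dim_strict_mono:
  assumes K: "subfield K R" and V: "finite_dimension K V" and U: "subalgebra K U R"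
    and UV: "U \<subset> V"
  shows "dim K U < dim K V"
proof -
  have "finite_dimension K U"
    using subalbegra_incl_imp_finite_dimension[OF K V U] UV by auto
  then have dU: "dimension (dim K U) K U" and dV: "dimension (dim K V) K V"
    using finite_dimensionE[OF K] V by (simp_all add: over_def)
  obtain Us where Us: "set Us \<subseteq> carrier R" "independent K Us" "length Us = dim K U"
      "Span K Us = U"
    using exists_base[OF K dU] by blast
  have Us_V: "set Us \<subseteq> V"
    using Span_base_incl[OF K Us(1)] Us(4) UV by auto
  have "length Us \<le> dim K V"
    using independent_length_le_dimension[OF K dV Us(2) Us_V] .
  moreover have "length Us \<noteq> dim K V"
    using independent_length_eq_dimension[OF K dV Us(2) Us_V] Us(4) UV by auto
  ultimately show ?thesis using Us(3) by simp
qed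

lemma (in monoid) nat_pow_fixed_iterate:
  assumes "x \<in> carrier G" "x [^] (m::nat) = x"
  shows "x [^] (m ^ c) = x"
proof (induction c)
  case (Suc c)
  have "x [^] (m ^ Suc c) = (x [^] (m ^ c)) [^] m"
    using assms by (simp add: nat_pow_pow mult.commute)
  with Suc assms show ?case by simp
qed (use assms in simp)

lemma (in ring) GF_sub_mono:
  assumes "a dvd b"
  shows "GF_sub R q a \<subseteq> GF_sub R q b"
proof
  fix x assume x: "x \<in> GF_sub R q a"
  obtain c where "b = a * c" using assms by blast
  then show "x \<in> GF_sub R q b"
    using x nat_pow_fixed_iterate[of x "q ^ a" c] unfolding GF_sub_def by (simp add: power_mult)
qed

lemma (in cring) GF_sub_mult_closed:
  assumes "x \<in> GF_sub R q t" "y \<in> GF_sub R q t"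
  shows "x \<otimes> y \<in> GF_sub R q t"
  using assms unfolding GF_sub_def by (auto simp: nat_pow_distrib)

lemma (in domain) GF_sub_mult_cancel:
  assumes "u \<in> GF_sub R q t" "u \<noteq> \<zero>" "u \<otimes> \<beta> \<in> GF_sub R q t" "\<beta> \<in> carrier R"
  shows "\<beta> \<in> GF_sub R q t"
proof -
  have u: "u \<in> carrier R" "u [^] (q ^ t) = u" using assms(1) by (auto simp: GF_sub_def)
  have "u \<otimes> \<beta> [^] (q ^ t) = u \<otimes> \<beta>"
    using assms(3,4) u by (auto simp: GF_sub_def nat_pow_distrib)
  then show ?thesis
    using m_lcancel[OF assms(2) u(1)] assms(4) by (simp add: GF_sub_def)
qed

lemma (in domain) scal_mult_eq_self:
  assumes "finite U" "U \<subseteq> carrier R" "\<beta> \<in> carrier R" "\<beta> \<noteq> \<zero>" "scal_mult R U \<beta> \<subseteq> U"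
  shows "scal_mult R U \<beta> = U"
proof -
  have "inj_on (\<lambda>u. u \<otimes> \<beta>) U"
    by (rule inj_onI) (use assms(2) m_rcancel[OF assms(4,3)] in auto)
  then have "card (scal_mult R U \<beta>) = card U"
    unfolding scal_mult_def by (rule card_image)
  then show ?thesis
    using card_subset_eq[OF assms(1,5)] by simp
qed

lemma (in ring) subspace_dist_self:
  assumes "subfield K R" "finite_dimension K U"
  shows "subspace_dist R K U U = 0"
  using sum_space_dim(2)[OF assms(1) assms(2) assms(2)] by (simp add: subspace_dist_def over_def)

lemma (in ring) subspace_dist_direct_sum:
  assumes K: "subfield K R" and "dimension s K U" "dimension s K V" "U \<inter> V = {\<zero>}"
  shows "subspace_dist R K U V = 2 * s"
  using dimI[OF K dimension_direct_sum_space[OF K assms(2-4)]] dimI[OF K zero_dim]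
  by (simp add: subspace_dist_def over_def assms(4))

lemma (in domain) subspace_dist_GF_sub_scal_mult:
  assumes "finite (carrier R)" "subfield K R" "finite_dimension K (GF_sub R q t)"
    and \<beta>: "\<beta> \<in> GF_sub R q t" "\<beta> \<noteq> \<zero>"
  shows "subspace_dist R K (GF_sub R q t) (scal_mult R (GF_sub R q t) \<beta>) = 0"
proof -
  have sub: "GF_sub R q t \<subseteq> carrier R" by (auto simp: GF_sub_def)
  have closed: "scal_mult R (GF_sub R q t) \<beta> \<subseteq> GF_sub R q t"
    using GF_sub_mult_closed \<beta>(1) by (auto simp: scal_mult_def)
  have "scal_mult R (GF_sub R q t) \<beta> = GF_sub R q t"
    using scal_mult_eq_self[OF finite_subset[OF sub assms(1)] sub subsetD[OF sub \<beta>(1)] \<beta>(2) closed] .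
  then show ?thesis
    using subspace_dist_self[OF assms(2,3)] by simp
qed

lemma (in domain) subspace_dist_scal_mult_outside_GF_sub:
  assumes K: "subfield K R" and U: "dimension s K U" "U \<subseteq> GF_sub R q t"
    and \<beta>: "\<beta> \<in> carrier R" "\<beta> \<noteq> \<zero>" "\<beta> \<notin> GF_sub R q t"
  shows "subspace_dist R K U (scal_mult R U \<beta>) = 2 * s"
proof (rule subspace_dist_direct_sum[OF K U(1)])
  show "dimension s K (scal_mult R U \<beta>)"
    unfolding scal_mult_def using dimension_mult_image[OF K U(1) \<beta>(1,2)] .
  have disjoint: "u \<otimes> \<beta> = \<zero>" if "u \<in> U" "u \<otimes> \<beta> \<in> U" for u
  proof (rule ccontr)
    assume "u \<otimes> \<beta> \<noteq> \<zero>"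
    then have "u \<noteq> \<zero>" using \<beta>(1) by auto
    then show False using that U(2) \<beta>(1,3) GF_sub_mult_cancel[of u q t \<beta>] by blast
  qed
  have "\<zero> \<in> U" using space_subgroup_props(2)[OF K U(1)] .
  then have "\<zero> \<in> U \<inter> scal_mult R U \<beta>"
    using \<beta>(1) l_null[OF \<beta>(1)] unfolding scal_mult_def by (metis IntI image_eqI)
  moreover have "U \<inter> scal_mult R U \<beta> \<subseteq> {\<zero>}"
    using disjoint unfolding scal_mult_def by blast
  ultimately show "U \<inter> scal_mult R U \<beta> = {\<zero>}" by blast
qed

lemma flag_mono:
  assumes "is_flag R K k F" "1 \<le> l" "l \<le> l'" "l' \<le> k"
  shows "F l \<subseteq> F l'"
  using assms(3)
proof (induction l' rule: dec_induct)
  case (step m)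
  have "F m \<subset> F (Suc m)" using assms step.hyps(1,2) unfolding is_flag_def by auto
  with step.IH show ?case by blast
qed simp

lemma flag_strict_mono:
  assumes "is_flag R K k F" "1 \<le> l" "l < l'" "l' \<le> k"
  shows "F l \<subset> F l'"
proof -
  have "F l \<subset> F (Suc l)" using assms unfolding is_flag_def by auto
  then show ?thesis using flag_mono[OF assms(1), of "Suc l" l'] assms by auto
qed

lemma (in ring) flag_finite_dimension:
  assumes K: "subfield K R" and fin: "finite_dimension K (carrier R)" and F: "is_flag R K k F"
    and l: "l \<in> {1..k}"
  shows "finite_dimension K (F l)"
proof -
  have sub: "subalgebra K (F l) R" using F l unfolding is_flag_def by auto
  show ?thesis
    using subalbegra_incl_imp_finite_dimension[OF K fin sub subalgebra_in_carrier[OF sub]] .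
qed

lemma (in ring) flag_dim_le_imp_subset:
  assumes K: "subfield K R" and fin: "finite_dimension K (carrier R)" and F: "is_flag R K k F"
    and l: "l \<in> {1..k}" "l' \<in> {1..k}" and le: "dim K (F l) \<le> dim K (F l')"
  shows "F l \<subseteq> F l'"
proof (cases "l \<le> l'")
  case True
  then show ?thesis using flag_mono[OF F] l by auto
next
  case False
  have "subalgebra K (F l') R" using F l unfolding is_flag_def by auto
  moreover have "F l' \<subset> F l" using flag_strict_mono[OF F] False l by auto
  ultimately have "dim K (F l') < dim K (F l)"
    using dim_strict_mono[OF K flag_finite_dimension[OF K fin F l(1)]] by blast
  with le show ?thesis by simp
qed

lemma galois_type_dvd:
  assumes "galois_type n r t" "1 \<le> i" "i \<le> j" "j \<le> r"
  shows "t i dvd t j"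
  using assms(3)
proof (induction j rule: dec_induct)
  case (step m)
  have "t m dvd t (Suc m)" using assms step.hyps(1,2) unfolding galois_type_def by auto
  with step.IH show ?case by (rule dvd_trans)
qed simp

theorem mainTheorem4:
  fixes R :: "('a, 'b) ring_scheme" (structure)
    and K :: "'a set" and n k r i :: nat and F :: "nat \<Rightarrow> 'a set" and t :: "nat \<Rightarrow> nat"
    and \<beta> :: 'a
  assumes "field R" and "finite (carrier R)" and "subfield K R"
    and "ring.dimension R n K (carrier R)"
    and "generalizes_galois R K n k F r t"
    and "underlying_galois R K k F r t"
    and "\<beta> \<in> carrier R" and "\<beta> \<noteq> \<zero>"
    and "i \<in> {1..r}"
  shows "(\<beta> \<in> GF_sub R (card K) (t i) - {\<zero>} \<longrightarrow>
            (\<forall>l\<in>{1..k}. flag_type R K F l \<in> t ` {i..r} \<longrightarrow>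
                subspace_dist R K (F l) (scal_mult R (F l) \<beta>) = 0))
       \<and> (\<beta> \<notin> GF_sub R (card K) (t i) - {\<zero>} \<longrightarrow>
            (\<forall>l\<in>{1..k}. flag_type R K F l \<le> t i \<longrightarrow>
                subspace_dist R K (F l) (scal_mult R (F l) \<beta>) = 2 * flag_type R K F l))"
proof -
  interpret field R by fact
  note K = \<open>subfield K R\<close> and i = \<open>i \<in> {1..r}\<close>
  have fin: "finite_dimension K (carrier R)" using finite_dimensionI[OF assms(4)] .
  have F: "is_flag R K k F" and gt: "galois_type n r t"
    and t_dims: "t ` {1..r} \<subseteq> flag_type R K F ` {1..k}"
    and galois: "\<And>j l. \<lbrakk>j \<in> {1..r}; l \<in> {1..k}; flag_type R K F l = t j\<rbrakk>
                   \<Longrightarrow> F l = GF_sub R (card K) (t j)"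
    using assms(5) unfolding generalizes_galois_def by auto
  have dim_F: "dimension (flag_type R K F l) K (F l)" if "l \<in> {1..k}" for l
    using finite_dimensionE[OF K flag_finite_dimension[OF K fin F that]]
    by (simp add: flag_type_def over_def)
  show ?thesis
  proof (intro conjI impI ballI)
    fix l assume \<beta>_in: "\<beta> \<in> GF_sub R (card K) (t i) - {\<zero>}" and l: "l \<in> {1..k}"
      and "flag_type R K F l \<in> t ` {i..r}"
    then obtain j where j: "j \<in> {i..r}" "flag_type R K F l = t j" by auto
    then have Fl: "F l = GF_sub R (card K) (t j)" using galois i l by auto
    have "\<beta> \<in> GF_sub R (card K) (t j)"
      using \<beta>_in GF_sub_mono[OF galois_type_dvd[OF gt]] i j(1) by auto
    then show "subspace_dist R K (F l) (scal_mult R (F l) \<beta>) = 0"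
      using subspace_dist_GF_sub_scal_mult[OF assms(2) K] finite_dimensionI[OF dim_F[OF l]] Fl
        assms(8) by simp
  next
    fix l assume \<beta>_out: "\<beta> \<notin> GF_sub R (card K) (t i) - {\<zero>}" and l: "l \<in> {1..k}"
      and le: "flag_type R K F l \<le> t i"
    obtain l' where l': "l' \<in> {1..k}" "flag_type R K F l' = t i" using t_dims i by force
    have "F l \<subseteq> GF_sub R (card K) (t i)"
      using flag_dim_le_imp_subset[OF K fin F l l'(1)] le l' galois[OF i l'(1)]
      unfolding flag_type_def by auto
    then show "subspace_dist R K (F l) (scal_mult R (F l) \<beta>) = 2 * flag_type R K F l"
      using subspace_dist_scal_mult_outside_GF_sub[OF K dim_F[OF l]] assms(7,8) \<beta>_out by auto
  qed
qed

end
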